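(* Let $\overline X,\overline Y$ be independent balanced real random variables with finite second moments, and let $E\in\mathbb{R}$. Then \[ \operatorname{Var}\big|\overline X+\overline Y+E\big| \;\ge\; \frac{1}{4}\max\big\{\operatorname{Var}|\overline X+E|,\ \operatorname{Var}|\overline Y+E|\big\}. \]
   Context: A random variable is balanced if it has expectation $0$. $\operatorname{Var} Z=\mathbb{E}[Z^2]-(\mathbb{E}Z)^2$. *)

theory Defs
  imports "HOL-Probability.Probability"
begin

definition Var :: "'a measure \<Rightarrow> ('a \<Rightarrow> real) \<Rightarrow> real" where
  "Var M Z = (LINT x|M. (Z x)^2) - (LINT x|M. Z x)^2"

end

theory Submission
  imports Defs
begin

text \<open>
  Put \<open>c = E|X+Y+E|\<close> and \<open>F y = E(|X+y+E| - c)\<^sup>2\<close>; by independence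
  \<open>Var|X+Y+E| = E F(Y)\<close>. For a mean-zero law \<open>\<nu>\<close> on two points \<open>u > 0 > -w\<close>, an elementary
  pointwise inequality \<open>(|t| - d)\<^sup>2/4 \<le> \<integral>(|t+y| - c)\<^sup>2 d\<nu>(y)\<close> with a well-chosen centre \<open>d\<close>
  gives \<open>\<integral>F d\<nu> \<ge> K := Var|X+E|/4\<close>; also \<open>F 0 \<ge> K\<close>. Comparing slopes, these bounds yield an
  affine minorant \<open>K + l y \<le> F y\<close>, and integrating it against the mean-zero law of \<open>Y\<close>
  gives \<open>Var|X+Y+E| \<ge> K\<close>. Exchanging \<open>X\<close> and \<open>Y\<close> gives the other half of the maximum.
\<close>

lemma quarter_sq_le_of_abs_diff_le:
  fixes a d s t :: real
  assumes "\<bar>a - d\<bar> \<le> s"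
  shows "(t - d)^2/4 \<le> (t - a)^2 + s^2"
proof -
  have "(t - d)^2 \<le> 2*(t - a)^2 + 2*(a - d)^2"
    using sum_squares_bound[of "t - a" "a - d"] by (simp add: power2_eq_square algebra_simps)
  moreover have "(a - d)^2 \<le> s^2" using assms abs_le_square_iff by fastforce
  ultimately show ?thesis using zero_le_power2[of "t - a"] zero_le_power2[of s] by linarith
qed

lemma quarter_sq_le_of_le_add:
  fixes a b d t :: real
  assumes "0 \<le> a" "0 \<le> b" "0 \<le> d" "0 \<le> t" "d \<le> a + b"
  shows "(t - d)^2/4 \<le> (t + a)^2 + b^2"
proof (cases "t \<le> d")
  case True
  have "(t - d)^2 \<le> (a + b)^2" using True assms by (intro power2_le_iff_abs_le[THEN iffD2]) auto
  also have "\<dots> \<le> 2*a^2 + 2*b^2" using sum_squares_bound[of a b] by (simp add: power2_sum)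
  also have "\<dots> \<le> 4*(t + a)^2 + 4*b^2"
  proof -
    have "a^2 \<le> (t + a)^2" using assms by (intro power_mono) auto
    then show ?thesis using zero_le_power2[of b] zero_le_power2[of a] by linarith
  qed
  finally show ?thesis by simp
next
  case False
  then have "(t - d)^2 \<le> (t + a)^2" using assms by (intro power_mono) auto
  then show ?thesis using zero_le_power2[of "t + a"] zero_le_power2[of b] by linarith
qed

text \<open>The left-hand side below is \<open>\<integral>(|t+y| - c)\<^sup>2 d\<nu>(y)\<close> for the mean-zero law \<open>\<nu>\<close>
  with weights \<open>w/(u+w)\<close> at \<open>u\<close> and \<open>u/(u+w)\<close> at \<open>-w\<close>.\<close>

lemma two_point_outer_eq:
  fixes u w c t :: real
  assumes "0 < u" "0 < w" "w \<le> t \<or> t \<le> -u"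
  shows "(w*(\<bar>t+u\<bar>-c)^2 + u*(\<bar>t-w\<bar>-c)^2)/(u+w) = (\<bar>t\<bar>-c)^2 + u*w"
proof -
  have "w*(\<bar>t+u\<bar>-c)^2 + u*(\<bar>t-w\<bar>-c)^2 = (u+w)*((\<bar>t\<bar>-c)^2 + u*w)"
    using assms by (cases "w \<le> t") (auto simp: power2_eq_square algebra_simps)
  then show ?thesis using assms by (simp add: field_simps)
qed

lemma two_point_inner_eq:
  fixes u w c t :: real
  assumes "0 < u + w" "-u \<le> t" "t \<le> w"
  shows "(w*(\<bar>t+u\<bar>-c)^2 + u*(\<bar>t-w\<bar>-c)^2)/(u+w)
           = (t - (w-u)/(u+w)*c)^2 + u*w*((u+w-2*c)/(u+w))^2"
proof -
  have key: "(w*(t+u-c)^2 + u*(w-t-c)^2)/L = (t - (w-u)/L*c)^2 + u*w*((L-2*c)/L)^2"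
    if "L \<noteq> 0" "w = L - u" for L
    using that(1) unfolding that(2) by (simp add: field_simps power2_eq_square)
  have "\<bar>t+u\<bar> = t+u" "\<bar>t-w\<bar> = w-t" using assms by auto
  then show ?thesis using key[of "u+w"] assms by simp
qed

lemma two_point_centre_exists:
  fixes u w c :: real
  assumes u: "0 < u" and uw: "u \<le> w" and c: "0 \<le> c"
  obtains d where "\<bar>c - d\<bar> \<le> sqrt (u*w)" "(w-u)/(u+w)*c \<le> d"
    "d \<le> (w-u)/(u+w)*c + sqrt (u*w) * \<bar>u+w-2*c\<bar>/(u+w)"
proof
  define L s k where "L = u + w" and "s = sqrt (u*w)" and "k = (w-u)/(u+w)"
  have L: "0 < L" using u uw by (simp add: L_def)
  have s0: "0 \<le> s" using u uw by (simp add: s_def)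
  have us: "u \<le> s"
    using u uw real_sqrt_le_mono[of "u*u" "u*w"] by (simp add: s_def)
  have "0 \<le> k" "k \<le> 1" using u uw by (simp_all add: k_def)
  then have kc: "0 \<le> k*c" "k*c \<le> c" using c by (simp_all add: mult_left_le_one_le)
  show "\<bar>c - max (k*c) (c - s)\<bar> \<le> s" "k*c \<le> max (k*c) (c - s)" using kc s0 by auto
  have "c - s - k*c \<le> s*\<bar>L - 2*c\<bar>/L"
  proof -
    have "c - s - k*c = 2*u*c/L - s" using L by (simp add: k_def L_def field_simps)
    also have "\<dots> \<le> 2 * s * c / L - s"
      using us c L by (intro diff_right_mono divide_right_mono mult_right_mono) auto
    also have "\<dots> = s*(2*c - L)/L" using L by (simp add: field_simps)
    also have "\<dots> \<le> s*\<bar>L - 2*c\<bar>/L"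
      using s0 L by (intro divide_right_mono mult_left_mono) auto
    finally show ?thesis .
  qed
  moreover have "0 \<le> s*\<bar>L - 2*c\<bar>/L" using s0 L by simp
  ultimately show "max (k*c) (c - s) \<le> k*c + s*\<bar>u+w-2*c\<bar>/(u+w)"
    by (simp add: L_def)
qed

lemma two_point_abs_dev_bound_ordered:
  fixes u w c :: real
  assumes u: "0 < u" and uw: "u \<le> w" and c: "0 \<le> c"
  shows "\<exists>d. \<forall>t. (\<bar>t\<bar> - d)^2/4 \<le> (w*(\<bar>t+u\<bar>-c)^2 + u*(\<bar>t-w\<bar>-c)^2)/(u+w)"
proof -
  define k b where "k = (w-u)/(u+w)" and "b = sqrt (u*w) * \<bar>u+w-2*c\<bar>/(u+w)"
  obtain d where cd: "\<bar>c - d\<bar> \<le> sqrt (u*w)" and kd: "k*c \<le> d" "d \<le> k*c + b"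
    using two_point_centre_exists[OF u uw c] unfolding k_def b_def by blast
  have uw0: "0 \<le> u*w" using u uw by simp
  have k0: "0 \<le> k" using u uw by (simp add: k_def)
  have b0: "0 \<le> b" using u uw uw0 by (simp add: b_def)
  have b2: "b^2 = u*w*((u+w-2*c)/(u+w))^2"
    using uw0 by (simp add: b_def power_mult_distrib power_divide)
  have "(\<bar>t\<bar> - d)^2/4 \<le> (w*(\<bar>t+u\<bar>-c)^2 + u*(\<bar>t-w\<bar>-c)^2)/(u+w)" for t
  proof (cases "w \<le> t \<or> t \<le> -u")
    case True
    have "(\<bar>t\<bar> - d)^2/4 \<le> (\<bar>t\<bar> - c)^2 + (sqrt (u*w))^2"
      by (rule quarter_sq_le_of_abs_diff_le[OF cd])
    then show ?thesis using two_point_outer_eq[OF u _ True] u uw uw0 by simp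
  next
    case False
    then have inner: "(w*(\<bar>t+u\<bar>-c)^2 + u*(\<bar>t-w\<bar>-c)^2)/(u+w) = (t - k*c)^2 + b^2"
      using two_point_inner_eq[of u w t c] u uw by (simp add: k_def b2)
    show ?thesis
    proof (cases "0 \<le> t")
      case True
      have "\<bar>k*c - d\<bar> \<le> b" using kd by simp
      then show ?thesis using quarter_sq_le_of_abs_diff_le[of "k*c" d b t] True inner by simp
    next
      case False
      have "(-t - d)^2/4 \<le> (-t + k*c)^2 + b^2"
        using quarter_sq_le_of_le_add[of "k*c" b d "-t"] mult_nonneg_nonneg[OF k0 c] b0 kd False
        by simp
      then show ?thesis using False inner by (simp add: power2_commute)
    qed
  qed
  then show ?thesis by blast
qed

lemma two_point_abs_dev_bound:
  fixes u w c :: real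
  assumes u: "0 < u" and w: "0 < w" and c: "0 \<le> c"
  shows "\<exists>d. \<forall>t. (\<bar>t\<bar> - d)^2/4 \<le> (w*(\<bar>t+u\<bar>-c)^2 + u*(\<bar>t-w\<bar>-c)^2)/(u+w)"
proof (cases "u \<le> w")
  case True
  from two_point_abs_dev_bound_ordered[OF u True c] show ?thesis .
next
  case False
  then obtain d
    where d: "\<And>t. (\<bar>t\<bar> - d)^2/4 \<le> (u*(\<bar>t+w\<bar>-c)^2 + w*(\<bar>t-u\<bar>-c)^2)/(w+u)"
    using two_point_abs_dev_bound_ordered[OF w _ c] by force
  have "(\<bar>t\<bar> - d)^2/4 \<le> (w*(\<bar>t+u\<bar>-c)^2 + u*(\<bar>t-w\<bar>-c)^2)/(u+w)" for t
  proof -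
    have "\<bar>-t+w\<bar> = \<bar>t-w\<bar>" "\<bar>-t-u\<bar> = \<bar>t+u\<bar>" by linarith+
    then show ?thesis using d[of "-t"] by (simp add: add.commute)
  qed
  then show ?thesis by blast
qed

lemma affine_minorant_of_two_point_bounds:
  fixes F :: "real \<Rightarrow> real" and K :: real
  assumes zero: "K \<le> F 0"
    and two_point: "\<And>u w. 0 < u \<Longrightarrow> 0 < w \<Longrightarrow> (u+w)*K \<le> w*F u + u*F (-w)"
  obtains l where "\<And>y. K + l*y \<le> F y"
proof
  \<comment> \<open>the two-point bounds say that every left slope of \<open>F\<close> at \<open>0\<close> lies below every right slope\<close>
  define S where "S = (\<lambda>u. (F u - K)/u) ` {0<..}"
  have slopes: "(K - F (-w))/w \<le> (F u - K)/u" if "0 < u" "0 < w" for u w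
  proof -
    have "u*(K - F (-w)) \<le> w*(F u - K)" using two_point[OF that] by (simp add: algebra_simps)
    then show ?thesis using that by (simp add: divide_simps mult.commute)
  qed
  have "S \<noteq> {}" by (auto simp: S_def)
  have "bdd_below S" unfolding S_def bdd_below_def using slopes[of _ 1] by auto
  fix y :: real
  consider "0 < y" | "y = 0" | "y < 0" by linarith
  then show "K + Inf S*y \<le> F y"
  proof cases
    case 1
    then have "Inf S \<le> (F y - K)/y" using \<open>bdd_below S\<close> by (intro cInf_lower) (auto simp: S_def)
    then show ?thesis using 1 by (simp add: divide_simps mult.commute)
  next
    case 2
    then show ?thesis using zero by simp
  next
    case 3
    have "(K - F y)/(-y) \<le> Inf S"
      using \<open>S \<noteq> {}\<close> slopes[of _ "-y"] 3 by (intro cInf_greatest) (auto simp: S_def)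
    then show ?thesis using 3 by (simp add: divide_simps mult.commute)
  qed
qed

lemma (in finite_measure) integrable_sq_abs_add_diff:
  fixes f :: "'a \<Rightarrow> real"
  assumes "integrable M f" "integrable M (\<lambda>x. (f x)^2)"
  shows "integrable M (\<lambda>x. (\<bar>f x + a\<bar> - c)^2)"
proof -
  have "(\<lambda>x. (\<bar>f x + a\<bar> - c)^2) = (\<lambda>x. (f x)^2 + 2*a*f x + a^2 - 2*c*\<bar>f x + a\<bar> + c^2)"
    by (simp add: fun_eq_iff power2_diff power2_sum)
  then show ?thesis using assms by simp
qed

lemma (in finite_measure) integrable_sq_add:
  fixes f g :: "'a \<Rightarrow> real"
  assumes "integrable M f" "integrable M g"
    and "integrable M (\<lambda>x. (f x)^2)" "integrable M (\<lambda>x. (g x)^2)"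
  shows "integrable M (\<lambda>x. (f x + g x)^2)"
proof (rule Bochner_Integration.integrable_bound)
  show "integrable M (\<lambda>x. 2*(f x)^2 + 2*(g x)^2)" using assms by simp
  show "(\<lambda>x. (f x + g x)^2) \<in> borel_measurable M" using assms by measurable
  show "AE x in M. norm ((f x + g x)^2) \<le> norm (2*(f x)^2 + 2*(g x)^2)"
  proof (intro AE_I2)
    fix x
    have "(f x + g x)^2 \<le> 2*(f x)^2 + 2*(g x)^2"
      using sum_squares_bound[of "f x" "g x"] by (simp add: power2_sum)
    then show "norm ((f x + g x)^2) \<le> norm (2*(f x)^2 + 2*(g x)^2)" by simp
  qed
qed

lemma (in prob_space) integral_sq_diff_eq_Var:
  fixes f :: "'a \<Rightarrow> real"
  assumes "integrable M f" "integrable M (\<lambda>x. (f x)^2)"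
  shows "(LINT x|M. (f x - d)^2) = Var M f + ((LINT x|M. f x) - d)^2"
proof -
  have "(\<lambda>x. (f x - d)^2) = (\<lambda>x. (f x)^2 - 2*d*f x + d^2)"
    by (simp add: fun_eq_iff power2_diff)
  then show ?thesis using assms by (simp add: prob_space Var_def power2_diff)
qed

lemma (in prob_space) Var_le_integral_sq_diff:
  fixes f :: "'a \<Rightarrow> real"
  assumes "integrable M f" "integrable M (\<lambda>x. (f x)^2)"
  shows "Var M f \<le> (LINT x|M. (f x - d)^2)"
  using integral_sq_diff_eq_Var[OF assms] by simp

lemma (in prob_space) Var_nonneg:
  fixes f :: "'a \<Rightarrow> real"
  assumes "integrable M f" "integrable M (\<lambda>x. (f x)^2)"
  shows "0 \<le> Var M f"
proof -
  have "0 \<le> (LINT x|M. (f x - (LINT x|M. f x))^2)" by simp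
  then show ?thesis using integral_sq_diff_eq_Var[OF assms, of "LINT x|M. f x"] by simp
qed

lemma (in prob_space) indep_var_sym:
  assumes "indep_var S X T Y"
  shows "indep_var T Y S X"
proof -
  define SX where "SX = sigma_sets (space M) {X -` A \<inter> space M | A. A \<in> sets S}"
  define SY where "SY = sigma_sets (space M) {Y -` A \<inter> space M | A. A \<in> sets T}"
  have rv: "random_variable S X" "random_variable T Y" and I: "indep_set SX SY"
    using assms unfolding SX_def SY_def indep_var_eq by blast+
  show ?thesis unfolding indep_var_eq SX_def[symmetric] SY_def[symmetric]
  proof (intro conjI indep_setI)
    show "SY \<subseteq> events" "SX \<subseteq> events" using indep_setD_ev2[OF I] indep_setD_ev1[OF I] .
    fix a b assume "a \<in> SY" "b \<in> SX"
    then show "prob (a \<inter> b) = prob a * prob b"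
      using indep_setD[OF I \<open>b \<in> SX\<close> \<open>a \<in> SY\<close>] by (simp add: Int_commute mult.commute)
  qed (use rv in auto)
qed

lemma (in prob_space) integral_indep_var_iterated:
  fixes X Y :: "'a \<Rightarrow> real" and g :: "real \<Rightarrow> real \<Rightarrow> real"
  assumes ind: "indep_var borel X borel Y"
    and g[measurable]: "(\<lambda>(x, y). g x y) \<in> borel_measurable (borel \<Otimes>\<^sub>M borel)"
    and int: "integrable M (\<lambda>\<omega>. g (X \<omega>) (Y \<omega>))"
  shows "integrable M (\<lambda>\<omega>. LINT \<omega>'|M. g (X \<omega>') (Y \<omega>))"
    and "(LINT \<omega>|M. g (X \<omega>) (Y \<omega>)) = (LINT \<omega>|M. LINT \<omega>'|M. g (X \<omega>') (Y \<omega>))"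
proof -
  have [measurable]: "X \<in> borel_measurable M" "Y \<in> borel_measurable M"
    using indep_var_rv1[OF ind] indep_var_rv2[OF ind] by simp_all
  define PX PY where "PX = distr M borel X" and "PY = distr M borel Y"
  interpret PX: prob_space PX unfolding PX_def by (rule prob_space_distr) simp
  interpret PY: prob_space PY unfolding PY_def by (rule prob_space_distr) simp
  interpret PXY: pair_prob_space PX PY ..
  have joint: "PX \<Otimes>\<^sub>M PY = distr M (borel \<Otimes>\<^sub>M borel) (\<lambda>\<omega>. (X \<omega>, Y \<omega>))"
    using ind unfolding PX_def PY_def indep_var_distribution_eq by simp
  have int_pair: "integrable (PX \<Otimes>\<^sub>M PY) (\<lambda>(x, y). g x y)"
    unfolding joint using int by (subst integrable_distr_eq) auto
  define G where "G y = (\<integral>x. g x y \<partial>PX)" for y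
  have G: "G y = (LINT \<omega>'|M. g (X \<omega>') y)" for y
    unfolding G_def PX_def by (subst integral_distr) auto
  have intG: "integrable PY G" unfolding G_def by (rule PXY.integrable_snd[OF int_pair])
  then have [measurable]: "G \<in> borel_measurable borel" by (simp add: PY_def)
  from intG show "integrable M (\<lambda>\<omega>. LINT \<omega>'|M. g (X \<omega>') (Y \<omega>))"
    unfolding PY_def G[symmetric] by (subst (asm) integrable_distr_eq) auto
  have "(LINT \<omega>|M. g (X \<omega>) (Y \<omega>)) = integral\<^sup>L (PX \<Otimes>\<^sub>M PY) (\<lambda>(x, y). g x y)"
    unfolding joint by (subst integral_distr) auto
  also have "\<dots> = (\<integral>y. G y \<partial>PY)" unfolding G_def by (rule PXY.integral_snd[OF int_pair, symmetric])
  also have "\<dots> = (LINT \<omega>|M. LINT \<omega>'|M. g (X \<omega>') (Y \<omega>))"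
    unfolding PY_def G[symmetric] by (subst integral_distr) auto
  finally show "(LINT \<omega>|M. g (X \<omega>) (Y \<omega>)) = (LINT \<omega>|M. LINT \<omega>'|M. g (X \<omega>') (Y \<omega>))" .
qed

lemma (in prob_space) integral_ge_of_affine_minorant:
  fixes Y :: "'a \<Rightarrow> real" and H :: "real \<Rightarrow> real"
  assumes "integrable M Y" "(LINT \<omega>|M. Y \<omega>) = 0" "integrable M (\<lambda>\<omega>. H (Y \<omega>))"
    and "\<And>y. K + l*y \<le> H y"
  shows "K \<le> (LINT \<omega>|M. H (Y \<omega>))"
proof -
  have "(LINT \<omega>|M. K + l * Y \<omega>) \<le> (LINT \<omega>|M. H (Y \<omega>))"
    using assms by (intro integral_mono) auto
  then show ?thesis using assms by (simp add: prob_space)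
qed

lemma (in prob_space) Var_abs_le_two_point:
  fixes T :: "'a \<Rightarrow> real"
  assumes T: "integrable M T" "integrable M (\<lambda>x. (T x)^2)"
    and u: "0 < u" and w: "0 < w" and c: "0 \<le> c"
  shows "(u+w) * Var M (\<lambda>x. \<bar>T x\<bar>) / 4
           \<le> w * (LINT x|M. (\<bar>T x + u\<bar> - c)^2) + u * (LINT x|M. (\<bar>T x - w\<bar> - c)^2)"
proof -
  obtain d where d: "\<And>t. (\<bar>t\<bar> - d)^2/4 \<le> (w*(\<bar>t+u\<bar>-c)^2 + u*(\<bar>t-w\<bar>-c)^2)/(u+w)"
    using two_point_abs_dev_bound[OF u w c] by blast
  have absT: "integrable M (\<lambda>x. \<bar>T x\<bar>)" "integrable M (\<lambda>x. \<bar>T x\<bar>^2)"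
    using T by simp_all
  have "Var M (\<lambda>x. \<bar>T x\<bar>)/4 \<le> (LINT x|M. (\<bar>T x\<bar> - d)^2/4)"
    using Var_le_integral_sq_diff[OF absT, of d] by simp
  also have "\<dots> \<le> (LINT x|M. (w*(\<bar>T x + u\<bar>-c)^2 + u*(\<bar>T x - w\<bar>-c)^2)/(u+w))"
    using d integrable_sq_abs_add_diff[OF T, of 0] integrable_sq_abs_add_diff[OF T, of u c]
      integrable_sq_abs_add_diff[OF T, of "-w" c]
    by (intro integral_mono) auto
  also have "\<dots> = (w * (LINT x|M. (\<bar>T x + u\<bar> - c)^2) + u * (LINT x|M. (\<bar>T x - w\<bar> - c)^2))/(u+w)"
    using integrable_sq_abs_add_diff[OF T, of u c] integrable_sq_abs_add_diff[OF T, of "-w" c]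
    by simp
  finally show ?thesis using u w by (simp add: field_simps)
qed

lemma (in prob_space) Var_abs_le_four_Var_abs_add_indep:
  fixes X Y :: "'a \<Rightarrow> real"
  assumes ind: "indep_var borel X borel Y"
    and X: "integrable M X" "integrable M (\<lambda>x. (X x)^2)"
    and Y: "integrable M Y" "integrable M (\<lambda>x. (Y x)^2)"
    and Y0: "(LINT x|M. Y x) = 0"
  shows "Var M (\<lambda>x. \<bar>X x\<bar>) \<le> 4 * Var M (\<lambda>x. \<bar>X x + Y x\<bar>)"
proof -
  define c where "c = (LINT x|M. \<bar>X x + Y x\<bar>)"
  define F where "F y = (LINT x|M. (\<bar>X x + y\<bar> - c)^2)" for y
  define K where "K = Var M (\<lambda>x. \<bar>X x\<bar>) / 4"
  have c: "0 \<le> c" unfolding c_def by simp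
  have absX: "integrable M (\<lambda>x. \<bar>X x\<bar>)" "integrable M (\<lambda>x. \<bar>X x\<bar>^2)" using X by simp_all
  have XY: "integrable M (\<lambda>x. X x + Y x)" "integrable M (\<lambda>x. (X x + Y x)^2)"
    using X Y integrable_sq_add by simp_all
  have "K \<le> F 0"
    using Var_le_integral_sq_diff[OF absX, of c] Var_nonneg[OF absX] by (simp add: F_def K_def)
  moreover have "(u+w)*K \<le> w*F u + u*F (-w)" if "0 < u" "0 < w" for u w
    using Var_abs_le_two_point[OF X that c] by (simp add: F_def K_def)
  ultimately obtain l where "\<And>y. K + l*y \<le> F y"
    using affine_minorant_of_two_point_bounds[of K F] by blast
  moreover have "integrable M (\<lambda>\<omega>. F (Y \<omega>))"
    and "(LINT \<omega>|M. F (Y \<omega>)) = (LINT \<omega>|M. (\<bar>X \<omega> + Y \<omega>\<bar> - c)^2)"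
    using integral_indep_var_iterated[OF ind, of "\<lambda>x y. (\<bar>x + y\<bar> - c)^2"]
      integrable_sq_abs_add_diff[OF XY, of 0 c]
    unfolding F_def by simp_all
  ultimately have "K \<le> (LINT \<omega>|M. (\<bar>X \<omega> + Y \<omega>\<bar> - c)^2)"
    using integral_ge_of_affine_minorant[OF Y(1) Y0] by metis
  also have "\<dots> = Var M (\<lambda>x. \<bar>X x + Y x\<bar>)"
    using integral_sq_diff_eq_Var[of "\<lambda>x. \<bar>X x + Y x\<bar>" c] XY by (simp add: c_def)
  finally show ?thesis by (simp add: K_def)
qed

theorem lemma7:
  fixes M :: "'a measure" and X Y :: "'a \<Rightarrow> real" and E :: real
  assumes "prob_space M"
    and "X \<in> borel_measurable M" and "Y \<in> borel_measurable M"
    and "prob_space.indep_var M borel X borel Y"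
    and "integrable M X" and "integrable M Y"
    and "integrable M (\<lambda>x. (X x)^2)" and "integrable M (\<lambda>x. (Y x)^2)"
    and "(LINT x|M. X x) = 0" and "(LINT x|M. Y x) = 0"
  shows "Var M (\<lambda>x. \<bar>X x + Y x + E\<bar>)
           \<ge> 1/4 * max (Var M (\<lambda>x. \<bar>X x + E\<bar>)) (Var M (\<lambda>x. \<bar>Y x + E\<bar>))"
proof -
  interpret prob_space M by fact
  have shift: "indep_var borel (\<lambda>x. U x + E) borel V"
    if "indep_var borel U borel V" for U V :: "'a \<Rightarrow> real"
    using indep_var_compose[OF that, of "\<lambda>t. t + E" borel id borel] by (simp add: o_def)
  have sq_shift: "integrable M (\<lambda>x. (U x + E)^2)"
    if "integrable M U" "integrable M (\<lambda>x. (U x)^2)" for U :: "'a \<Rightarrow> real"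
    using integrable_sq_add[of U "\<lambda>_. E"] that by simp
  have "Var M (\<lambda>x. \<bar>X x + E\<bar>) \<le> 4 * Var M (\<lambda>x. \<bar>X x + E + Y x\<bar>)"
    using Var_abs_le_four_Var_abs_add_indep[OF shift[OF assms(4)] _ sq_shift[OF assms(5,7)] assms(6,8,10)]
      assms(5) by simp
  moreover have "Var M (\<lambda>x. \<bar>Y x + E\<bar>) \<le> 4 * Var M (\<lambda>x. \<bar>Y x + E + X x\<bar>)"
    using Var_abs_le_four_Var_abs_add_indep[OF shift[OF indep_var_sym[OF assms(4)]] _
        sq_shift[OF assms(6,8)] assms(5,7,9)]
      assms(6) by simp
  ultimately show ?thesis by (simp add: ac_simps)
qed

end
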